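(* Let $\mathcal{F}=\langle\mathbb{A},(\mu_i)_{i\in\mathsf{Ag}}\rangle$ be an APE-structure and $\mathbb{E}=(E,(\sim_i),(P_i),\Phi,\mathsf{pre})$ a probabilistic event structure over $\mathbb{A}$. Then the intermediate structure $\prod_{\mathbb{E}}\mathcal{F}=\langle\prod_{\mathbb{E}}\mathbb{A},(\mu'_i)_{i\in\mathsf{Ag}}\rangle$ is an ApPE-structure. Furthermore, if $y\in\prod_{\mathbb{E}}\mathbb{A}$ satisfies $\bigvee_{a\in\Phi}a\leq y(e)$ for every $e\in E$, then $\mu'_i(x)=\mu'_i(x\wedge y)$ for every $x$ in the domain of $\mu'_i$.
   Context: Fix a set $\mathsf{Ag}$ of agents. A monadic Heyting algebra is a Heyting algebra $\mathbb{L}$ with, for each $i\in\mathsf{Ag}$, monotone unary operations $\lozenge_i,\Box_i$ such that for all $a,b$: $a\leq\lozenge_i a$; $\Box_i a\leq a$; $\lozenge_i(a\vee b)\leq\lozenge_i a\vee\lozenge_i b$; $\Box_i(a\to b)\leq\Box_i a\to\Box_i b$; $\lozenge_i a\leq\Box_i\lozenge_i a$; $\lozenge_i\Box_i a\leq\Box_i a$; $\Box_i(a\to b)\leq\lozenge_i a\to\lozenge_i b$; $\lozenge_i\bot\leq\bot$; $\top\leq\Box_i\top$. An epistemic Heyting algebra is a finite monadic Heyting algebra with $\lozenge_i a\vee\neg\lozenge_i a=\top$ for all $i,a$. An element $a$ is $i$-minimal if $a\neq\bot$, $\lozenge_i a=a$, and whenever $b<a$ and $\lozenge_i b=b$ then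 $b=\bot$; $\mathsf{Min}_i(\mathbb{A})$ is the set of $i$-minimal elements. A partial map $\mu:\mathbb{A}\to\mathbb{R}^+$ is an $i$-premeasure if: (1) $\mathsf{dom}(\mu)=\mathsf{Min}_i(\mathbb{A}){\downarrow}$; (2) $\mu$ is order-preserving; (3) for every $a\in\mathsf{Min}_i(\mathbb{A})$ and $b,c\leq a$, $\mu(b\vee c)=\mu(b)+\mu(c)-\mu(b\wedge c)$; (4) $\mu(\bot)=0$ if $\mathsf{dom}(\mu)\neq\varnothing$. It is an $i$-measure if also (5) for $a\in\mathsf{Min}_i(\mathbb{A})$ and $b<c\leq a$, $\mu(b)<\mu(c)$; (6) $\mu(a)=1$ for $a\in\mathsf{Min}_i(\mathbb{A})$. An ApPE-structure (resp. APE-structure) is $\langle\mathbb{A},(\mu_i)_{i\in\mathsf{Ag}}\rangle$ with $\mathbb{A}$ an epistemic Heyting algebra and each $\mu_i$ an $i$-premeasure (resp. $i$-measure). A pre-ordered multiset on $X$ is a multiset in which the copies $x_1,\dots,x_n$ of an element carry the linear order $x_1\prec\cdots\prec x_n$. A probabilistic event structure over $\mathbb{A}$ is $(E,(\sim_i),(P_i),\Phi,\mathsf{pre})$: $E$ non-empty finite; $\sim_i$ equivalence relations on $E$; $P_i:E\to\,]0,1]$ with $\sum\{P_i(e')\mid e'\sim_i e\}=1$; $\Phi$ a finite pre-ordered multiset on $\mathbb{A}$ such that any $a,b\in\Phi$ arising from distinct elements satisfy $a\wedge b=\bot$ or $a<b$ or $b<a$; $\mathsf{pre}(\bullet\mid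 a)$ a probability distribution on $E$ for each $a\in\Phi$; and if $\mathsf{pre}(e\mid a)=0$ then $\mathsf{pre}(e\mid b)=0$ for $b\in\Phi$ with $a<b$ (distinct elements) or $a\prec b$ (copies). For $a\in\Phi$, $\mathrm{mb}(a)$ is the set of maximal elements of $\Phi\cap({\downarrow}a\setminus\{a\})$, and $\mu^a_i(x):=\mu_i(x\wedge a)-\sum_{b\in\mathrm{mb}(a)}\mu_i(x\wedge b)$ for $x\in\mathsf{Min}_i(\mathbb{A}){\downarrow}$. The intermediate algebra $\prod_{\mathbb{E}}\mathbb{A}$ has as carrier all maps $f:E\to\mathbb{A}$, pointwise Heyting operations, $(\lozenge'_i f)(e)=\bigvee\{\lozenge_i f(e')\mid e'\sim_i e\}$ and $(\Box'_i f)(e)=\bigwedge\{\Box_i f(e')\mid e'\sim_i e\}$. The intermediate structure $\prod_{\mathbb{E}}\mathcal{F}$ equips it with $\mu'_i:\mathsf{Min}_i(\prod_{\mathbb{E}}\mathbb{A}){\downarrow}\to\mathbb{R}^+$, $\mu'_i(f)=\sum_{e\in E}\sum_{a\in\Phi}P_i(e)\cdot\mu^a_i(f(e))\cdot\mathsf{pre}(e\mid a)$ ($i$-minimality in $\prod_{\mathbb{E}}\mathbb{A}$ taken w.r.t. $\lozenge'_i$). *)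

theory Defs
  imports Complex_Main
begin

text \<open>A Heyting algebra is represented by a type 'a of class bounded_lattice
  (carrier = UNIV, lattice order = the class order) together with an implication
  operation satisfying the residuation law.\<close>

definition heyting_imp :: "('a::bounded_lattice \<Rightarrow> 'a \<Rightarrow> 'a) \<Rightarrow> bool" where
  "heyting_imp imp \<longleftrightarrow> (\<forall>a b c. c \<le> imp a b \<longleftrightarrow> inf c a \<le> b)"

definition monadic_HA ::
  "('a::bounded_lattice \<Rightarrow> 'a \<Rightarrow> 'a) \<Rightarrow> ('i \<Rightarrow> 'a \<Rightarrow> 'a) \<Rightarrow> ('i \<Rightarrow> 'a \<Rightarrow> 'a) \<Rightarrow> bool" where
  "monadic_HA imp dia box \<longleftrightarrow> heyting_imp imp \<and>
     (\<forall>i. mono (dia i) \<and> mono (box i) \<and>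
       (\<forall>a b.
          a \<le> dia i a \<and>
          box i a \<le> a \<and>
          dia i (sup a b) \<le> sup (dia i a) (dia i b) \<and>
          box i (imp a b) \<le> imp (box i a) (box i b) \<and>
          dia i a \<le> box i (dia i a) \<and>
          dia i (box i a) \<le> box i a \<and>
          box i (imp a b) \<le> imp (dia i a) (dia i b)) \<and>
       dia i bot \<le> bot \<and>
       top \<le> box i top)"

definition epistemic_HA ::
  "('a::bounded_lattice \<Rightarrow> 'a \<Rightarrow> 'a) \<Rightarrow> ('i \<Rightarrow> 'a \<Rightarrow> 'a) \<Rightarrow> ('i \<Rightarrow> 'a \<Rightarrow> 'a) \<Rightarrow> bool" where
  "epistemic_HA imp dia box \<longleftrightarrow> finite (UNIV :: 'a set) \<and> monadic_HA imp dia box \<and>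
     (\<forall>i a. sup (dia i a) (imp (dia i a) bot) = top)"

definition i_minimal :: "('a::bounded_lattice \<Rightarrow> 'a) \<Rightarrow> 'a \<Rightarrow> bool" where
  "i_minimal d a \<longleftrightarrow> a \<noteq> bot \<and> d a = a \<and> (\<forall>b. b < a \<and> d b = b \<longrightarrow> b = bot)"

definition Min_i :: "('a::bounded_lattice \<Rightarrow> 'a) \<Rightarrow> 'a set" where
  "Min_i d = {a. i_minimal d a}"

definition MinDown :: "('a::bounded_lattice \<Rightarrow> 'a) \<Rightarrow> 'a set" where
  "MinDown d = {x. \<exists>a\<in>Min_i d. x \<le> a}"

text \<open>Partial maps into the non-negative reals are modelled as option-valued maps.\<close>

definition premeasure :: "('a::bounded_lattice \<Rightarrow> 'a) \<Rightarrow> ('a \<Rightarrow> real option) \<Rightarrow> bool" where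
  "premeasure d m \<longleftrightarrow>
     dom m = MinDown d \<and>
     (\<forall>x\<in>dom m. 0 \<le> the (m x)) \<and>
     (\<forall>x\<in>dom m. \<forall>y\<in>dom m. x \<le> y \<longrightarrow> the (m x) \<le> the (m y)) \<and>
     (\<forall>a\<in>Min_i d. \<forall>b c. b \<le> a \<longrightarrow> c \<le> a \<longrightarrow>
        the (m (sup b c)) = the (m b) + the (m c) - the (m (inf b c))) \<and>
     (dom m \<noteq> {} \<longrightarrow> m bot = Some 0)"

definition i_measure :: "('a::bounded_lattice \<Rightarrow> 'a) \<Rightarrow> ('a \<Rightarrow> real option) \<Rightarrow> bool" where
  "i_measure d m \<longleftrightarrow> premeasure d m \<and>
     (\<forall>a\<in>Min_i d. \<forall>b c. b < c \<longrightarrow> c \<le> a \<longrightarrow> the (m b) < the (m c)) \<and>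
     (\<forall>a\<in>Min_i d. m a = Some 1)"

definition ApPE ::
  "('a::bounded_lattice \<Rightarrow> 'a \<Rightarrow> 'a) \<Rightarrow> ('i \<Rightarrow> 'a \<Rightarrow> 'a) \<Rightarrow> ('i \<Rightarrow> 'a \<Rightarrow> 'a)
   \<Rightarrow> ('i \<Rightarrow> 'a \<Rightarrow> real option) \<Rightarrow> bool" where
  "ApPE imp dia box mu \<longleftrightarrow> epistemic_HA imp dia box \<and> (\<forall>i. premeasure (dia i) (mu i))"

definition APE ::
  "('a::bounded_lattice \<Rightarrow> 'a \<Rightarrow> 'a) \<Rightarrow> ('i \<Rightarrow> 'a \<Rightarrow> 'a) \<Rightarrow> ('i \<Rightarrow> 'a \<Rightarrow> 'a)
   \<Rightarrow> ('i \<Rightarrow> 'a \<Rightarrow> real option) \<Rightarrow> bool" where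
  "APE imp dia box mu \<longleftrightarrow> epistemic_HA imp dia box \<and> (\<forall>i. i_measure (dia i) (mu i))"

text \<open>The set of events E is the (finite) universe of a type 'e.
  The pre-ordered multiset Phi is a list phi of elements of the algebra: its tokens are the
  positions 0..<length phi, and copies of the same element are linearly ordered by position.\<close>

definition tok_lt :: "'a::order list \<Rightarrow> nat \<Rightarrow> nat \<Rightarrow> bool" where
  "tok_lt phi p q \<longleftrightarrow> p < length phi \<and> q < length phi \<and>
     (phi ! p < phi ! q \<or> (phi ! p = phi ! q \<and> p < q))"

definition prob_event_structure ::
  "('i \<Rightarrow> 'e \<Rightarrow> 'e \<Rightarrow> bool) \<Rightarrow> ('i \<Rightarrow> 'e \<Rightarrow> real) \<Rightarrow> 'a::bounded_lattice list
   \<Rightarrow> (nat \<Rightarrow> 'e \<Rightarrow> real) \<Rightarrow> bool" where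
  "prob_event_structure R P phi pre \<longleftrightarrow>
     finite (UNIV :: 'e set) \<and>
     (\<forall>i. equivp (R i)) \<and>
     (\<forall>i e. 0 < P i e \<and> P i e \<le> 1) \<and>
     (\<forall>i e. (\<Sum>e'\<in>{e'. R i e' e}. P i e') = 1) \<and>
     (\<forall>p<length phi. \<forall>q<length phi. phi ! p \<noteq> phi ! q \<longrightarrow>
        inf (phi ! p) (phi ! q) = bot \<or> phi ! p < phi ! q \<or> phi ! q < phi ! p) \<and>
     (\<forall>p<length phi. (\<forall>e. 0 \<le> pre p e) \<and> (\<Sum>e\<in>UNIV. pre p e) = 1) \<and>
     (\<forall>p<length phi. \<forall>q<length phi. \<forall>e. pre p e = 0 \<longrightarrow> tok_lt phi p q \<longrightarrow> pre q e = 0)"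

definition mb :: "'a::order list \<Rightarrow> nat \<Rightarrow> nat set" where
  "mb phi p = {q. tok_lt phi q p \<and> \<not> (\<exists>r. tok_lt phi r p \<and> tok_lt phi q r)}"

definition mu_tok ::
  "('a::bounded_lattice \<Rightarrow> real option) \<Rightarrow> 'a list \<Rightarrow> nat \<Rightarrow> 'a \<Rightarrow> real" where
  "mu_tok m phi p x = the (m (inf x (phi ! p))) - (\<Sum>q\<in>mb phi p. the (m (inf x (phi ! q))))"

text \<open>Carrier: all maps 'e \<Rightarrow> 'a; lattice operations and order are the pointwise
  ones (Isabelle's function instances); implication is pointwise.\<close>

definition int_imp :: "('a \<Rightarrow> 'a \<Rightarrow> 'a) \<Rightarrow> ('e \<Rightarrow> 'a) \<Rightarrow> ('e \<Rightarrow> 'a) \<Rightarrow> ('e \<Rightarrow> 'a)" where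
  "int_imp imp f g = (\<lambda>e. imp (f e) (g e))"

definition int_dia ::
  "('i \<Rightarrow> 'a::bounded_lattice \<Rightarrow> 'a) \<Rightarrow> ('i \<Rightarrow> 'e \<Rightarrow> 'e \<Rightarrow> bool) \<Rightarrow> 'i \<Rightarrow> ('e \<Rightarrow> 'a) \<Rightarrow> ('e \<Rightarrow> 'a)" where
  "int_dia dia R i f = (\<lambda>e. Sup_fin {dia i (f e') | e'. R i e' e})"

definition int_box ::
  "('i \<Rightarrow> 'a::bounded_lattice \<Rightarrow> 'a) \<Rightarrow> ('i \<Rightarrow> 'e \<Rightarrow> 'e \<Rightarrow> bool) \<Rightarrow> 'i \<Rightarrow> ('e \<Rightarrow> 'a) \<Rightarrow> ('e \<Rightarrow> 'a)" where
  "int_box box R i f = (\<lambda>e. Inf_fin {box i (f e') | e'. R i e' e})"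

definition int_mu ::
  "('i \<Rightarrow> 'a::bounded_lattice \<Rightarrow> 'a) \<Rightarrow> ('i \<Rightarrow> 'a \<Rightarrow> real option) \<Rightarrow> ('i \<Rightarrow> 'e \<Rightarrow> 'e \<Rightarrow> bool)
   \<Rightarrow> ('i \<Rightarrow> 'e \<Rightarrow> real) \<Rightarrow> 'a list \<Rightarrow> (nat \<Rightarrow> 'e \<Rightarrow> real) \<Rightarrow> 'i \<Rightarrow> ('e \<Rightarrow> 'a) \<Rightarrow> real option" where
  "int_mu dia mu R P phi pre i f =
     (if f \<in> MinDown (int_dia dia R i)
      then Some (\<Sum>e\<in>UNIV. \<Sum>p<length phi. P i e * mu_tok (mu i) phi p (f e) * pre p e)
      else None)"

end

theory Submission
  imports Defs
begin

text \<open>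
  Every axiom of a monadic Heyting algebra lifts pointwise to the maps \<open>E \<Rightarrow> A\<close>, because the
  lifted modalities are joins and meets over \<open>\<sim>\<^sub>i\<close>-classes and the values of the lifted
  diamond are diamond-closed; the latter also yields the epistemic law.

  An \<open>i\<close>-minimal map of the product is an \<open>i\<close>-minimal element \<open>c\<close> of \<open>A\<close> spread over one
  \<open>\<sim>\<^sub>i\<close>-class, so on its downset \<open>\<mu>'\<^sub>i\<close> is a nonnegative combination of the maps
  \<open>x \<mapsto> \<mu>\<^sup>a\<^sub>i (x e)\<close> on the downset of \<open>c\<close>. Since the tokens in \<open>mb(a)\<close> are pairwise
  disjoint (\<open>\<Phi>\<close> is laminar), \<open>\<mu>\<^sup>a\<^sub>i x = \<mu>\<^sub>i (x \<sqinter> a) - \<mu>\<^sub>i (x \<sqinter> d)\<close> for the join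
  \<open>d \<le> a\<close> of \<open>mb(a)\<close>, and such differences are again monotone and modular. Hence the
  premeasure axioms, which are exactly the statement that \<open>\<mu>'\<^sub>i\<close> is a monotone modular
  function vanishing at \<open>\<bottom>\<close> below each \<open>i\<close>-minimal map, carry over.
  Finally \<open>\<mu>\<^sup>a\<^sub>i x\<close> only depends on \<open>x \<sqinter> \<Squnion>\<Phi>\<close>.
\<close>

lemma heyting_imp_inf_sup_distrib:
  fixes imp :: "'a::bounded_lattice \<Rightarrow> 'a \<Rightarrow> 'a" and a b c :: 'a
  assumes "heyting_imp imp"
  shows "inf c (sup a b) = sup (inf c a) (inf c b)"
proof (rule antisym)
  have res: "z \<le> imp x y \<longleftrightarrow> inf z x \<le> y" for x y z
    using assms unfolding heyting_imp_def by blast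
  have "a \<le> imp c (sup (inf c a) (inf c b))" "b \<le> imp c (sup (inf c a) (inf c b))"
    by (metis res inf.commute sup_ge1 sup_ge2)+
  then have "sup a b \<le> imp c (sup (inf c a) (inf c b))"
    by simp
  then show "inf c (sup a b) \<le> sup (inf c a) (inf c b)"
    by (metis res inf.commute)
qed (simp add: le_infI2 inf_mono)

lemma heyting_imp_inf_Sup_fin_le:
  fixes imp :: "'a::bounded_lattice \<Rightarrow> 'a \<Rightarrow> 'a" and x s :: 'a
  assumes "heyting_imp imp" "finite A" "A \<noteq> {}" "\<And>a. a \<in> A \<Longrightarrow> inf x a \<le> s"
  shows "inf x (Sup_fin A) \<le> s"
proof -
  have res: "z \<le> imp x y \<longleftrightarrow> inf z x \<le> y" for x y z
    using assms(1) unfolding heyting_imp_def by blast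
  have "Sup_fin A \<le> imp x s"
    using assms(2,3) by (rule Sup_fin.boundedI) (metis res assms(4) inf.commute)
  then show ?thesis
    by (metis res inf.commute)
qed

section \<open>Valuations on a principal downset\<close>

definition valuation_below :: "'a::bounded_lattice \<Rightarrow> ('a \<Rightarrow> real) \<Rightarrow> bool" where
  "valuation_below c F \<longleftrightarrow> F bot = 0 \<and>
     (\<forall>x y. x \<le> y \<longrightarrow> y \<le> c \<longrightarrow> F x \<le> F y) \<and>
     (\<forall>x y. x \<le> c \<longrightarrow> y \<le> c \<longrightarrow> F (sup x y) = F x + F y - F (inf x y))"

lemma valuation_belowI:
  assumes "F bot = 0"
    and "\<And>x y. x \<le> y \<Longrightarrow> y \<le> c \<Longrightarrow> F x \<le> F y"
    and "\<And>x y. x \<le> c \<Longrightarrow> y \<le> c \<Longrightarrow> F (sup x y) = F x + F y - F (inf x y)"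
  shows "valuation_below c F"
  using assms unfolding valuation_below_def by blast

lemma valuation_below_bot: "valuation_below c F \<Longrightarrow> F bot = 0"
  unfolding valuation_below_def by blast

lemma valuation_below_mono: "valuation_below c F \<Longrightarrow> x \<le> y \<Longrightarrow> y \<le> c \<Longrightarrow> F x \<le> F y"
  unfolding valuation_below_def by blast

lemma valuation_below_modular:
  "valuation_below c F \<Longrightarrow> x \<le> c \<Longrightarrow> y \<le> c \<Longrightarrow> F (sup x y) = F x + F y - F (inf x y)"
  unfolding valuation_below_def by blast

lemma valuation_below_nonneg: "valuation_below c F \<Longrightarrow> x \<le> c \<Longrightarrow> 0 \<le> F x"
  using valuation_below_mono[of c F bot x] valuation_below_bot by fastforce

lemma valuation_below_antimono: "valuation_below c F \<Longrightarrow> b \<le> c \<Longrightarrow> valuation_below b F"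
  unfolding valuation_below_def by (meson order_trans)

lemma valuation_below_cong:
  assumes "\<And>x. x \<le> c \<Longrightarrow> F x = G x"
  shows "valuation_below c F \<longleftrightarrow> valuation_below c G"
proof -
  have "F x = G x" if "x \<le> y" "y \<le> c" for x y
    using assms that by auto
  moreover have "F (sup x y) = G (sup x y) \<and> F (inf x y) = G (inf x y)" if "x \<le> c" "y \<le> c" for x y
    using assms that by (simp add: le_infI1)
  ultimately show ?thesis
    unfolding valuation_below_def using assms[OF bot_least] assms by (smt (verit) order_refl)
qed

lemma valuation_below_scale:
  "valuation_below c F \<Longrightarrow> 0 \<le> w \<Longrightarrow> valuation_below c (\<lambda>x. w * F x)"
  unfolding valuation_below_def by (simp add: mult_left_mono distrib_left right_diff_distrib)

lemma valuation_below_sum: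
  assumes "\<And>k. k \<in> S \<Longrightarrow> valuation_below c (F k)"
  shows "valuation_below c (\<lambda>x. \<Sum>k\<in>S. F k x)"
  using assms unfolding valuation_below_def
  by (simp add: sum_mono sum.distrib sum_subtractf)

lemma valuation_below_apply:
  "valuation_below c F \<Longrightarrow> valuation_below (\<lambda>_. c) (\<lambda>f. F (f e))"
  unfolding valuation_below_def le_fun_def by simp

lemma valuation_below_inf_diff:
  fixes imp :: "'a::bounded_lattice \<Rightarrow> 'a \<Rightarrow> 'a" and a D :: 'a
  assumes imp: "heyting_imp imp" and F: "valuation_below c F" and "D \<le> a"
  shows "valuation_below c (\<lambda>x. F (inf x a) - F (inf x D))"
proof (rule valuation_belowI)
  have modular_inf: "F (inf (sup x y) b) = F (inf x b) + F (inf y b) - F (inf (inf x y) b)"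
    if "x \<le> c" "y \<le> c" for x y b
  proof -
    have "inf (sup x y) b = sup (inf x b) (inf y b)"
      using heyting_imp_inf_sup_distrib[OF imp, of b x y] by (simp add: inf_commute)
    moreover have "inf (inf x b) (inf y b) = inf (inf x y) b"
      by (simp add: inf_aci)
    ultimately show ?thesis
      using valuation_below_modular[OF F, of "inf x b" "inf y b"] that by (simp add: le_infI1)
  qed
  show "F (inf (sup x y) a) - F (inf (sup x y) D)
      = F (inf x a) - F (inf x D) + (F (inf y a) - F (inf y D)) - (F (inf (inf x y) a) - F (inf (inf x y) D))"
    if "x \<le> c" "y \<le> c" for x y
    using modular_inf[OF that, of a] modular_inf[OF that, of D] by simp
  show "F (inf x a) - F (inf x D) \<le> F (inf y a) - F (inf y D)" if xy: "x \<le> y" "y \<le> c" for x y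
  proof -
    \<comment> \<open>the join of \<open>x \<sqinter> a\<close> and \<open>y \<sqinter> D\<close> lies below \<open>y \<sqinter> a\<close> and meets in \<open>x \<sqinter> D\<close>\<close>
    have meet: "inf (inf x a) (inf y D) = inf x D"
      using xy \<open>D \<le> a\<close> by (intro antisym) (auto intro: le_infI1 le_infI2)
    have "F (sup (inf x a) (inf y D)) \<le> F (inf y a)"
      using xy \<open>D \<le> a\<close>
      by (intro valuation_below_mono[OF F]) (auto intro: le_infI1 le_infI2 inf_mono)
    moreover have "F (sup (inf x a) (inf y D)) = F (inf x a) + F (inf y D) - F (inf x D)"
      using valuation_below_modular[OF F, of "inf x a" "inf y D"] xy meet
      by (metis inf.coboundedI1 order_trans)
    ultimately show ?thesis by simp
  qed
qed (simp add: valuation_below_bot[OF F])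

lemma valuation_below_sum_disjoint:
  fixes imp :: "'a::bounded_lattice \<Rightarrow> 'a \<Rightarrow> 'a" and f :: "'b \<Rightarrow> 'a"
  assumes imp: "heyting_imp imp" and F: "valuation_below c F" and "x \<le> c"
    and "finite S" and "pairwise (\<lambda>q r. inf (f q) (f r) = bot) S"
  shows "(\<Sum>q\<in>S. F (inf x (f q))) = F (inf x (Sup_fin (insert bot (f ` S))))"
  using assms(4,5)
proof (induction S rule: finite_induct)
  case empty
  then show ?case by (simp add: valuation_below_bot[OF F])
next
  case (insert q S)
  let ?J = "Sup_fin (insert bot (f ` S))"
  have disjoint_rest: "inf (f q) (f r) = bot" if "r \<in> S" for r
    using insert.prems insert.hyps that by (auto simp: pairwise_def)
  have "inf (f q) ?J \<le> bot"
    by (rule heyting_imp_inf_Sup_fin_le[OF imp]) (use insert.hyps disjoint_rest in auto)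
  then have disjoint: "inf (inf x (f q)) (inf x ?J) = bot"
    by (metis bot.extremum_uniqueI inf.cobounded2 inf_mono)
  have "Sup_fin (insert bot (f ` insert q S)) = Sup_fin (insert (f q) (insert bot (f ` S)))"
    by (simp only: image_insert insert_commute)
  also have "\<dots> = sup (f q) ?J"
    using insert.hyps by (intro Sup_fin.insert) auto
  finally have "F (inf x (Sup_fin (insert bot (f ` insert q S))))
      = F (inf x (f q)) + F (inf x ?J)"
    using heyting_imp_inf_sup_distrib[OF imp, of x "f q" ?J] disjoint \<open>x \<le> c\<close>
      valuation_below_modular[OF F, of "inf x (f q)" "inf x ?J"] valuation_below_bot[OF F]
    by (simp add: le_infI1)
  with insert show ?case
    by (simp add: pairwise_insert)
qed

lemma MinDown_downward_closed: "y \<in> MinDown d \<Longrightarrow> x \<le> y \<Longrightarrow> x \<in> MinDown d"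
  unfolding MinDown_def using order.trans by fastforce

lemma premeasure_iff_valuation_below:
  "premeasure d m \<longleftrightarrow> dom m = MinDown d \<and> (\<forall>a\<in>Min_i d. valuation_below a (\<lambda>x. the (m x)))"
proof
  assume m: "premeasure d m"
  have dom: "dom m = MinDown d"
    and mono: "\<And>x y. x \<in> dom m \<Longrightarrow> y \<in> dom m \<Longrightarrow> x \<le> y \<Longrightarrow> the (m x) \<le> the (m y)"
    and modular: "\<And>a b c. a \<in> Min_i d \<Longrightarrow> b \<le> a \<Longrightarrow> c \<le> a \<Longrightarrow>
        the (m (sup b c)) = the (m b) + the (m c) - the (m (inf b c))"
    using m unfolding premeasure_def by simp_all
  have bot: "dom m \<noteq> {} \<longrightarrow> m bot = Some 0"
    using m unfolding premeasure_def by (elim conjE)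
  have "valuation_below a (\<lambda>x. the (m x))" if a: "a \<in> Min_i d" for a
  proof (rule valuation_belowI)
    have below_a: "x \<in> dom m" if "x \<le> a" for x
      using a that unfolding dom MinDown_def by blast
    then have "dom m \<noteq> {}"
      by blast
    then show "the (m bot) = 0"
      using bot by simp
    show "the (m x) \<le> the (m y)" if "x \<le> y" "y \<le> a" for x y
      using mono[OF below_a[OF order.trans[OF that]] below_a[OF that(2)] that(1)] .
    show "the (m (sup x y)) = the (m x) + the (m y) - the (m (inf x y))" if "x \<le> a" "y \<le> a" for x y
      using modular a that by blast
  qed
  with dom show "dom m = MinDown d \<and> (\<forall>a\<in>Min_i d. valuation_below a (\<lambda>x. the (m x)))"
    by blast
next
  assume "dom m = MinDown d \<and> (\<forall>a\<in>Min_i d. valuation_below a (\<lambda>x. the (m x)))"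
  then have dom: "dom m = MinDown d" and val: "\<And>a. a \<in> Min_i d \<Longrightarrow> valuation_below a (\<lambda>x. the (m x))"
    by blast+
  have below_Min: "\<exists>a\<in>Min_i d. x \<le> a" if "x \<in> dom m" for x
    using that unfolding dom MinDown_def by blast
  show "premeasure d m"
    unfolding premeasure_def
  proof (intro conjI ballI allI impI)
    show "0 \<le> the (m x)" if "x \<in> dom m" for x
      using below_Min[OF that] by (metis val valuation_below_nonneg)
    show "the (m x) \<le> the (m y)" if "x \<in> dom m" "y \<in> dom m" "x \<le> y" for x y
      using below_Min[OF that(2)] by (metis val valuation_below_mono that(3))
    show "the (m (sup b c)) = the (m b) + the (m c) - the (m (inf b c))"
      if "a \<in> Min_i d" "b \<le> a" "c \<le> a" for a b c
      using valuation_below_modular[OF val[OF that(1)] that(2,3)] .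
    show "m bot = Some 0" if nonempty: "dom m \<noteq> {}"
    proof -
      obtain a where a: "a \<in> Min_i d"
        using nonempty below_Min by blast
      then have "bot \<in> dom m"
        unfolding dom MinDown_def by auto
      then show ?thesis
        using valuation_below_bot[OF val[OF a]] by auto
    qed
  qed (rule dom)
qed

section \<open>Token measures of a laminar multiset\<close>

definition laminar :: "'a::bounded_lattice list \<Rightarrow> bool" where
  "laminar phi \<longleftrightarrow> (\<forall>p<length phi. \<forall>q<length phi. phi ! p \<noteq> phi ! q \<longrightarrow>
     inf (phi ! p) (phi ! q) = bot \<or> phi ! p < phi ! q \<or> phi ! q < phi ! p)"

lemma mb_tok_lt: "q \<in> mb phi p \<Longrightarrow> tok_lt phi q p"
  unfolding mb_def by blast

lemma finite_mb: "finite (mb phi p)"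
  by (rule finite_subset[of _ "{..<length phi}"]) (auto dest: mb_tok_lt simp: tok_lt_def)

lemma pairwise_disjoint_mb:
  assumes "laminar phi"
  shows "pairwise (\<lambda>q r. inf (phi ! q) (phi ! r) = bot) (mb phi p)"
proof (rule pairwiseI)
  fix q r assume q: "q \<in> mb phi p" and r: "r \<in> mb phi p" and "q \<noteq> r"
  \<comment> \<open>maximality of \<open>q\<close> and \<open>r\<close> below \<open>p\<close> forbids them to be comparable tokens\<close>
  have incomparable: "\<not> tok_lt phi q r" "\<not> tok_lt phi r q"
    using q r mb_tok_lt unfolding mb_def by blast+
  have lengths: "q < length phi" "r < length phi"
    using q r by (auto dest!: mb_tok_lt simp: tok_lt_def)
  show "inf (phi ! q) (phi ! r) = bot"
  proof (cases "phi ! q = phi ! r")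
    case True
    then have "tok_lt phi q r \<or> tok_lt phi r q"
      using lengths \<open>q \<noteq> r\<close> unfolding tok_lt_def by auto
    with incomparable show ?thesis by blast
  next
    case False
    then show ?thesis
      using assms lengths incomparable unfolding laminar_def tok_lt_def by blast
  qed
qed

lemma mu_tok_eq_diff:
  fixes imp :: "'a::bounded_lattice \<Rightarrow> 'a \<Rightarrow> 'a" and m :: "'a \<Rightarrow> real option"
  assumes imp: "heyting_imp imp" and m: "valuation_below c (\<lambda>x. the (m x))"
    and "laminar phi" and "x \<le> c"
  shows "mu_tok m phi p x
    = the (m (inf x (phi ! p))) - the (m (inf x (Sup_fin (insert bot ((!) phi ` mb phi p)))))"
  unfolding mu_tok_def
  using valuation_below_sum_disjoint[OF imp m \<open>x \<le> c\<close> finite_mb pairwise_disjoint_mb[OF \<open>laminar phi\<close>]]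
  by simp

lemma valuation_below_mu_tok:
  fixes imp :: "'a::bounded_lattice \<Rightarrow> 'a \<Rightarrow> 'a" and m :: "'a \<Rightarrow> real option"
  assumes imp: "heyting_imp imp" and m: "valuation_below c (\<lambda>x. the (m x))" and "laminar phi"
  shows "valuation_below c (mu_tok m phi p)"
proof -
  have "Sup_fin (insert bot ((!) phi ` mb phi p)) \<le> phi ! p"
    by (rule Sup_fin.boundedI) (auto dest!: mb_tok_lt simp: finite_mb tok_lt_def)
  then show ?thesis
    by (subst valuation_below_cong[OF mu_tok_eq_diff[OF imp m \<open>laminar phi\<close>]])
      (simp_all add: valuation_below_inf_diff[OF imp m])
qed

lemma mu_tok_inf_upper_bound:
  assumes "\<forall>a\<in>set phi. a \<le> z" and "p < length phi"
  shows "mu_tok m phi p (inf x z) = mu_tok m phi p x"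
proof -
  have "inf (inf x z) (phi ! q) = inf x (phi ! q)" if "q < length phi" for q
    using assms(1) that by (metis inf.absorb2 inf.assoc nth_mem)
  moreover have "q < length phi" if "q \<in> mb phi p" for q
    using that by (auto dest!: mb_tok_lt simp: tok_lt_def)
  ultimately show ?thesis
    unfolding mu_tok_def using assms(2) by simp
qed

lemma le_foldr_sup: "a \<in> set xs \<Longrightarrow> a \<le> foldr sup xs (bot :: 'a::bounded_lattice)"
  by (induction xs) (auto intro: le_supI2)

section \<open>The intermediate structure\<close>

locale monadic_heyting_algebra =
  fixes imp :: "'a::bounded_lattice \<Rightarrow> 'a \<Rightarrow> 'a" and dia box :: "'i \<Rightarrow> 'a \<Rightarrow> 'a"
  assumes monadic: "monadic_HA imp dia box"
begin

lemma heyting: "heyting_imp imp"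
  using monadic unfolding monadic_HA_def by blast

lemma le_imp_iff: "z \<le> imp x y \<longleftrightarrow> inf z x \<le> y"
  using heyting unfolding heyting_imp_def by blast

lemma dia_mono: "a \<le> b \<Longrightarrow> dia i a \<le> dia i b"
  using monadic unfolding monadic_HA_def mono_def by blast

lemma box_mono: "a \<le> b \<Longrightarrow> box i a \<le> box i b"
  using monadic unfolding monadic_HA_def mono_def by blast

lemma dia_inflationary: "a \<le> dia i a"
  using monadic unfolding monadic_HA_def by blast

lemma box_deflationary: "box i a \<le> a"
  using monadic unfolding monadic_HA_def by blast

lemma dia_sup_le: "dia i (sup a b) \<le> sup (dia i a) (dia i b)"
  using monadic unfolding monadic_HA_def by blast

lemma box_imp_le: "box i (imp a b) \<le> imp (box i a) (box i b)"
  using monadic unfolding monadic_HA_def by blast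

lemma dia_le_box_dia: "dia i a \<le> box i (dia i a)"
  using monadic unfolding monadic_HA_def by blast

lemma dia_box_le_box: "dia i (box i a) \<le> box i a"
  using monadic unfolding monadic_HA_def by blast

lemma box_imp_le_imp_dia: "box i (imp a b) \<le> imp (dia i a) (dia i b)"
  using monadic unfolding monadic_HA_def by blast

lemma dia_bot [simp]: "dia i bot = bot"
  using monadic unfolding monadic_HA_def by (simp add: bot_unique)

lemma box_top [simp]: "box i top = top"
  using monadic unfolding monadic_HA_def by (simp add: top_unique)

lemma dia_idem [simp]: "dia i (dia i a) = dia i a"
proof (rule antisym)
  have "dia i (dia i a) \<le> dia i (box i (dia i a))"
    by (rule dia_mono[OF dia_le_box_dia])
  also have "\<dots> \<le> dia i a"
    using dia_box_le_box box_deflationary by (rule order_trans)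
  finally show "dia i (dia i a) \<le> dia i a" .
qed (rule dia_inflationary)

lemma dia_Sup_fin_closed:
  assumes "finite A" "A \<noteq> {}" "\<And>a. a \<in> A \<Longrightarrow> dia i a = a"
  shows "dia i (Sup_fin A) = Sup_fin A"
  using assms
proof (induction A rule: finite_ne_induct)
  case (insert a A)
  have "dia i (sup a (Sup_fin A)) \<le> sup a (Sup_fin A)"
    using dia_sup_le[of i a "Sup_fin A"] insert by simp
  then show ?case
    using insert dia_inflationary by (simp add: antisym)
qed simp

end

locale event_frame = monadic_heyting_algebra imp dia box
  for imp :: "'a::bounded_lattice \<Rightarrow> 'a \<Rightarrow> 'a" and dia box :: "'i \<Rightarrow> 'a \<Rightarrow> 'a" +
  fixes R :: "'i \<Rightarrow> 'e \<Rightarrow> 'e \<Rightarrow> bool"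
  assumes equivp_R: "equivp (R i)" and finite_events: "finite (UNIV :: 'e set)"
begin

lemma R_refl: "R i e e"
  using equivp_R by (meson equivp_reflp)

lemma R_class_eq: "R i e1 e2 \<Longrightarrow> R i e e1 \<longleftrightarrow> R i e e2"
  using equivp_R by (meson equivp_symp equivp_transp)

lemma class_image_finite: "finite {G e' |e'. R i e' e}"
  by (rule finite_image_set) (rule finite_subset[OF subset_UNIV finite_events])

lemma class_image_nonempty: "{G e' |e'. R i e' e} \<noteq> {}"
  using R_refl by blast

lemma int_dia_le_iff: "int_dia dia R i f e \<le> x \<longleftrightarrow> (\<forall>e'. R i e' e \<longrightarrow> dia i (f e') \<le> x)"
  unfolding int_dia_def Sup_fin.bounded_iff[OF class_image_finite class_image_nonempty] by blast

lemma dia_le_int_dia: "R i e' e \<Longrightarrow> dia i (f e') \<le> int_dia dia R i f e"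
  using int_dia_le_iff by blast

lemma le_int_box_iff: "x \<le> int_box box R i f e \<longleftrightarrow> (\<forall>e'. R i e' e \<longrightarrow> x \<le> box i (f e'))"
  unfolding int_box_def Inf_fin.bounded_iff[OF class_image_finite class_image_nonempty] by blast

lemma int_box_le_box: "R i e' e \<Longrightarrow> int_box box R i f e \<le> box i (f e')"
  using le_int_box_iff by blast

lemma inf_int_dia_le:
  assumes "\<And>e'. R i e' e \<Longrightarrow> inf x (dia i (f e')) \<le> s"
  shows "inf x (int_dia dia R i f e) \<le> s"
  unfolding int_dia_def
  by (rule heyting_imp_inf_Sup_fin_le[OF heyting class_image_finite class_image_nonempty])
    (use assms in blast)

lemma int_dia_class_eq: "R i e1 e2 \<Longrightarrow> int_dia dia R i f e1 = int_dia dia R i f e2"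
  by (simp add: int_dia_def R_class_eq)

lemma int_box_class_eq: "R i e1 e2 \<Longrightarrow> int_box box R i f e1 = int_box box R i f e2"
  by (simp add: int_box_def R_class_eq)

lemma dia_int_dia [simp]: "dia i (int_dia dia R i f e) = int_dia dia R i f e"
  unfolding int_dia_def
  by (rule dia_Sup_fin_closed[OF class_image_finite class_image_nonempty]) auto

lemma int_dia_inflationary: "f \<le> int_dia dia R i f"
  unfolding le_fun_def using order_trans[OF dia_inflationary dia_le_int_dia[OF R_refl]] by blast

lemma int_box_deflationary: "int_box box R i f \<le> f"
  unfolding le_fun_def using order_trans[OF int_box_le_box[OF R_refl] box_deflationary] by blast

lemma mono_int_dia: "mono (int_dia dia R i)"
proof (rule monoI)
  fix f g :: "'e \<Rightarrow> 'a" assume "f \<le> g"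
  show "int_dia dia R i f \<le> int_dia dia R i g"
    unfolding le_fun_def int_dia_le_iff
  proof (intro allI impI)
    fix e e' assume "R i e' e"
    have "dia i (f e') \<le> dia i (g e')"
      using \<open>f \<le> g\<close> by (simp add: dia_mono le_fun_def)
    also have "\<dots> \<le> int_dia dia R i g e"
      using \<open>R i e' e\<close> by (rule dia_le_int_dia)
    finally show "dia i (f e') \<le> int_dia dia R i g e" .
  qed
qed

lemma mono_int_box: "mono (int_box box R i)"
proof (rule monoI)
  fix f g :: "'e \<Rightarrow> 'a" assume "f \<le> g"
  show "int_box box R i f \<le> int_box box R i g"
    unfolding le_fun_def le_int_box_iff
  proof (intro allI impI)
    fix e e' assume "R i e' e"
    have "int_box box R i f e \<le> box i (f e')"
      using \<open>R i e' e\<close> by (rule int_box_le_box)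
    also have "\<dots> \<le> box i (g e')"
      using \<open>f \<le> g\<close> by (simp add: box_mono le_fun_def)
    finally show "int_box box R i f e \<le> box i (g e')" .
  qed
qed

lemma int_dia_sup_le: "int_dia dia R i (sup f g) \<le> sup (int_dia dia R i f) (int_dia dia R i g)"
  unfolding le_fun_def int_dia_le_iff sup_apply
proof (intro allI impI)
  fix e e' assume "R i e' e"
  then have "sup (dia i (f e')) (dia i (g e')) \<le> sup (int_dia dia R i f e) (int_dia dia R i g e)"
    by (intro sup_mono dia_le_int_dia)
  with dia_sup_le show "dia i (sup (f e') (g e')) \<le> sup (int_dia dia R i f e) (int_dia dia R i g e)"
    by (rule order_trans)
qed

lemma int_box_imp_le:
  "int_box box R i (int_imp imp f g) \<le> int_imp imp (int_box box R i f) (int_box box R i g)"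
  unfolding le_fun_def int_imp_def le_imp_iff le_int_box_iff
proof (intro allI impI)
  fix e e' assume "R i e' e"
  then have "inf (int_box box R i (\<lambda>e. imp (f e) (g e)) e) (int_box box R i f e)
      \<le> inf (box i (imp (f e') (g e'))) (box i (f e'))"
    by (intro inf_mono int_box_le_box)
  also have "\<dots> \<le> box i (g e')"
    using box_imp_le le_imp_iff by blast
  finally show "inf (int_box box R i (\<lambda>e. imp (f e) (g e)) e) (int_box box R i f e) \<le> box i (g e')" .
qed

lemma int_dia_le_int_box_int_dia: "int_dia dia R i f \<le> int_box box R i (int_dia dia R i f)"
  unfolding le_fun_def le_int_box_iff
proof (intro allI impI)
  fix e e' assume "R i e' e"
  have "int_dia dia R i f e = dia i (int_dia dia R i f e)"
    by simp
  also have "\<dots> \<le> box i (dia i (int_dia dia R i f e))"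
    by (rule dia_le_box_dia)
  also have "\<dots> = box i (int_dia dia R i f e')"
    using int_dia_class_eq[OF \<open>R i e' e\<close>] by simp
  finally show "int_dia dia R i f e \<le> box i (int_dia dia R i f e')" .
qed

lemma int_dia_int_box_le: "int_dia dia R i (int_box box R i f) \<le> int_box box R i f"
  unfolding le_fun_def int_dia_le_iff
proof (intro allI impI)
  fix e e' assume "R i e' e"
  have "dia i (int_box box R i f e) \<le> box i (f e'')" if "R i e'' e" for e''
    using dia_mono[OF int_box_le_box[OF that]] dia_box_le_box by (rule order_trans)
  then show "dia i (int_box box R i f e') \<le> int_box box R i f e"
    using int_box_class_eq[OF \<open>R i e' e\<close>] le_int_box_iff by simp
qed

lemma int_box_imp_le_imp_int_dia:
  "int_box box R i (int_imp imp f g) \<le> int_imp imp (int_dia dia R i f) (int_dia dia R i g)"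
  unfolding le_fun_def int_imp_def le_imp_iff
proof (intro allI inf_int_dia_le)
  fix e e' assume "R i e' e"
  then have "inf (int_box box R i (\<lambda>e. imp (f e) (g e)) e) (dia i (f e'))
      \<le> inf (box i (imp (f e') (g e'))) (dia i (f e'))"
    by (intro inf_mono int_box_le_box order_refl)
  also have "\<dots> \<le> dia i (g e')"
    using box_imp_le_imp_dia le_imp_iff by blast
  also have "\<dots> \<le> int_dia dia R i g e"
    using \<open>R i e' e\<close> by (rule dia_le_int_dia)
  finally show "inf (int_box box R i (\<lambda>e. imp (f e) (g e)) e) (dia i (f e')) \<le> int_dia dia R i g e" .
qed

lemma monadic_HA_int: "monadic_HA (int_imp imp) (int_dia dia R) (int_box box R)"
  unfolding monadic_HA_def
proof (intro conjI allI)
  show "heyting_imp (int_imp imp)"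
    unfolding heyting_imp_def int_imp_def le_fun_def by (simp add: le_imp_iff)
  show "int_dia dia R i bot \<le> bot" "top \<le> int_box box R i top" for i
    unfolding le_fun_def by (simp_all add: int_dia_le_iff le_int_box_iff)
qed (simp_all add: mono_int_dia mono_int_box int_dia_inflationary int_box_deflationary
    int_dia_sup_le int_box_imp_le int_dia_le_int_box_int_dia int_dia_int_box_le
    int_box_imp_le_imp_int_dia)

lemma epistemic_HA_int:
  assumes "epistemic_HA imp dia box"
  shows "epistemic_HA (int_imp imp) (int_dia dia R) (int_box box R)"
  unfolding epistemic_HA_def
proof (intro conjI allI)
  have "finite (UNIV :: 'a set)"
    using assms unfolding epistemic_HA_def by blast
  from finite_set_of_finite_funs[OF finite_events this, of undefined]
  show "finite (UNIV :: ('e \<Rightarrow> 'a) set)"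
    by simp
  fix i and f :: "'e \<Rightarrow> 'a"
  show "sup (int_dia dia R i f) (int_imp imp (int_dia dia R i f) bot) = top"
  proof
    fix e
    have "sup (dia i (int_dia dia R i f e)) (imp (dia i (int_dia dia R i f e)) bot) = top"
      using assms unfolding epistemic_HA_def by blast
    then show "sup (int_dia dia R i f) (int_imp imp (int_dia dia R i f) bot) e = top e"
      by (simp add: int_imp_def)
  qed
qed (rule monadic_HA_int)

lemma int_dia_class_indicator:
  assumes "dia i b = b"
  shows "int_dia dia R i (\<lambda>e. if R i e e0 then b else bot) = (\<lambda>e. if R i e e0 then b else bot)"
proof (rule antisym)
  show "int_dia dia R i (\<lambda>e. if R i e e0 then b else bot) \<le> (\<lambda>e. if R i e e0 then b else bot)"
    unfolding le_fun_def int_dia_le_iff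
  proof (intro allI impI)
    fix e e' assume "R i e' e"
    then have "R i e' e0 \<longleftrightarrow> R i e e0"
      using equivp_R by (meson equivp_symp equivp_transp)
    then show "dia i (if R i e' e0 then b else bot) \<le> (if R i e e0 then b else bot)"
      using assms by simp
  qed
qed (rule int_dia_inflationary)

lemma Min_i_int_dia_le_const:
  assumes "g \<in> Min_i (int_dia dia R i)"
  shows "\<exists>c\<in>Min_i (dia i). g \<le> (\<lambda>_. c)"
proof -
  have "g \<noteq> bot" and closed: "int_dia dia R i g = g"
    and minimal: "\<And>f. f < g \<Longrightarrow> int_dia dia R i f = f \<Longrightarrow> f = bot"
    using assms unfolding Min_i_def i_minimal_def by auto
  obtain e0 where "g e0 \<noteq> bot"
    using \<open>g \<noteq> bot\<close> by (auto simp: fun_eq_iff)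
  \<comment> \<open>\<open>g\<close> will turn out to be \<open>block (g e0)\<close>\<close>
  define block where "block b = (\<lambda>e. if R i e e0 then b else bot)" for b :: 'a
  have dia_g: "dia i (g e) = g e" for e
    using dia_int_dia[of i g e] closed by simp
  have g_class: "g e = g e0" if "R i e e0" for e
    using int_dia_class_eq[OF that, of g] closed by simp
  have block_e0: "block b e0 = b" for b
    by (simp add: block_def R_refl)
  have block_eq: "block b = g" if "dia i b = b" "b \<le> g e0" "b \<noteq> bot" for b
  proof -
    have "block b \<le> g"
      unfolding block_def le_fun_def using that(2) g_class by auto
    moreover have "block b \<noteq> bot"
      using that(3) block_e0[of b] by (metis bot_apply)
    moreover have "int_dia dia R i (block b) = block b"
      unfolding block_def by (rule int_dia_class_indicator[OF that(1)])
    ultimately show ?thesis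
      using minimal[of "block b"] by (auto simp: less_le)
  qed
  have "g e \<le> g e0" for e
  proof -
    have "g e = block (g e0) e"
      using block_eq[OF dia_g order_refl \<open>g e0 \<noteq> bot\<close>] by simp
    also have "\<dots> \<le> g e0"
      by (simp add: block_def)
    finally show ?thesis .
  qed
  moreover have "g e0 \<in> Min_i (dia i)"
    unfolding Min_i_def i_minimal_def
  proof (intro CollectI conjI allI impI)
    show "b = bot" if "b < g e0 \<and> dia i b = b" for b
    proof (rule ccontr)
      assume "b \<noteq> bot"
      with that have "block b = g"
        by (intro block_eq) (simp_all add: less_imp_le)
      then have "b = g e0"
        using block_e0[of b] by simp
      with that show False
        by simp
    qed
  qed (use \<open>g e0 \<noteq> bot\<close> dia_g in auto)
  ultimately show ?thesis
    by (auto simp: le_fun_def)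
qed

lemma premeasure_int_mu:
  assumes mu: "premeasure (dia i) (mu i)" and "laminar phi"
    and P_nonneg: "\<And>e. 0 \<le> P i e" and pre_nonneg: "\<And>p e. p < length phi \<Longrightarrow> 0 \<le> pre p e"
  shows "premeasure (int_dia dia R i) (int_mu dia mu R P phi pre i)"
proof -
  define V where "V f = (\<Sum>e\<in>UNIV. \<Sum>p<length phi. P i e * mu_tok (mu i) phi p (f e) * pre p e)"
    for f :: "'e \<Rightarrow> 'a"
  have V: "valuation_below (\<lambda>_. c) V" if "c \<in> Min_i (dia i)" for c
  proof -
    have "valuation_below c (\<lambda>x. the (mu i x))"
      using mu that unfolding premeasure_iff_valuation_below by blast
    then have mu_tok_valuation: "valuation_below c (mu_tok (mu i) phi p)" for p
      by (rule valuation_below_mu_tok[OF heyting _ \<open>laminar phi\<close>])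
    have summand: "valuation_below (\<lambda>_. c) (\<lambda>f. P i e * mu_tok (mu i) phi p (f e) * pre p e)"
      if "p < length phi" for e p
    proof -
      have "0 \<le> P i e * pre p e"
        using P_nonneg pre_nonneg[OF that] by simp
      from valuation_below_scale[OF valuation_below_apply[OF mu_tok_valuation] this]
      show ?thesis
        by (simp add: mult_ac)
    qed
    show ?thesis
      unfolding V_def by (intro valuation_below_sum summand) simp
  qed
  have "valuation_below g (\<lambda>f. the (int_mu dia mu R P phi pre i f))"
    if g: "g \<in> Min_i (int_dia dia R i)" for g
  proof -
    obtain c where c: "c \<in> Min_i (dia i)" and g_le: "g \<le> (\<lambda>_. c)"
      using Min_i_int_dia_le_const[OF g] by blast
    have g_MinDown: "g \<in> MinDown (int_dia dia R i)"
      unfolding MinDown_def using g order_refl by blast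
    have "the (int_mu dia mu R P phi pre i f) = V f" if "f \<le> g" for f
      using MinDown_downward_closed[OF g_MinDown that] unfolding int_mu_def V_def by simp
    then have "valuation_below g (\<lambda>f. the (int_mu dia mu R P phi pre i f)) \<longleftrightarrow> valuation_below g V"
      by (rule valuation_below_cong)
    with valuation_below_antimono[OF V[OF c] g_le] show ?thesis
      by simp
  qed
  moreover have "dom (int_mu dia mu R P phi pre i) = MinDown (int_dia dia R i)"
    unfolding dom_def int_mu_def by simp
  ultimately show ?thesis
    unfolding premeasure_iff_valuation_below by blast
qed

end

lemma int_mu_inf_upper_bound:
  assumes "\<forall>e. foldr sup phi bot \<le> y e" and "x \<in> dom (int_mu dia mu R P phi pre i)"
  shows "int_mu dia mu R P phi pre i x = int_mu dia mu R P phi pre i (inf x y)"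
proof -
  have x: "x \<in> MinDown (int_dia dia R i)"
    using assms(2) unfolding dom_def int_mu_def by (simp split: if_splits)
  then have "inf x y \<in> MinDown (int_dia dia R i)"
    by (rule MinDown_downward_closed) simp
  moreover have "mu_tok (mu i) phi p (inf (x e) (y e)) = mu_tok (mu i) phi p (x e)"
    if "p < length phi" for e p
  proof (rule mu_tok_inf_upper_bound[OF _ that])
    show "\<forall>a\<in>set phi. a \<le> y e"
      using order_trans[OF le_foldr_sup spec[OF assms(1), of e]] by blast
  qed
  ultimately show ?thesis
    using x unfolding int_mu_def by simp
qed

theorem proposition6:
  fixes imp :: "'a::bounded_lattice \<Rightarrow> 'a \<Rightarrow> 'a"
    and dia box :: "'i \<Rightarrow> 'a \<Rightarrow> 'a"
    and mu :: "'i \<Rightarrow> 'a \<Rightarrow> real option"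
    and R :: "'i \<Rightarrow> 'e \<Rightarrow> 'e \<Rightarrow> bool"
    and P :: "'i \<Rightarrow> 'e \<Rightarrow> real"
    and phi :: "'a list"
    and pre :: "nat \<Rightarrow> 'e \<Rightarrow> real"
  assumes "APE imp dia box mu"
    and "prob_event_structure R P phi pre"
  shows "ApPE (int_imp imp) (int_dia dia R) (int_box box R) (int_mu dia mu R P phi pre) \<and>
         (\<forall>y :: 'e \<Rightarrow> 'a. (\<forall>e. foldr sup phi bot \<le> y e) \<longrightarrow>
            (\<forall>i x. x \<in> dom (int_mu dia mu R P phi pre i) \<longrightarrow>
               int_mu dia mu R P phi pre i x = int_mu dia mu R P phi pre i (inf x y)))"
proof -
  have epistemic: "epistemic_HA imp dia box" and mu: "\<And>i. premeasure (dia i) (mu i)"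
    using assms(1) unfolding APE_def i_measure_def by auto
  interpret event_frame imp dia box R
    using epistemic assms(2) unfolding epistemic_HA_def prob_event_structure_def
    by unfold_locales auto
  have laminar: "laminar phi" and P_nonneg: "\<And>i e. 0 \<le> P i e"
    and pre_nonneg: "\<And>p e. p < length phi \<Longrightarrow> 0 \<le> pre p e"
    using assms(2) unfolding prob_event_structure_def laminar_def by (auto intro: less_imp_le)
  have "premeasure (int_dia dia R i) (int_mu dia mu R P phi pre i)" for i
    by (rule premeasure_int_mu[OF mu laminar P_nonneg pre_nonneg])
  with epistemic_HA_int[OF epistemic]
  have "ApPE (int_imp imp) (int_dia dia R) (int_box box R) (int_mu dia mu R P phi pre)"
    unfolding ApPE_def by simp
  then show ?thesis
    by (intro conjI allI impI) (assumption | rule int_mu_inf_upper_bound)+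
qed

end
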